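(* Let $\mathcal{H}\in\mathbb{C}^{[n_1,\ldots,n_m]}$. Then $\mathcal{H}$ is HSOS if and only if $\mathfrak{m}(\mathcal{H})$ is positive semidefinite.
   Context: $\mathbb{C}^{[n_1,\ldots,n_m]}$ is the real vector space of tensors $\mathcal{H}\in\mathbb{C}^{n_1\times\cdots\times n_m\times n_1\times\cdots\times n_m}$ with $\mathcal{H}_{i_1\ldots i_m j_1\ldots j_m}=\overline{\mathcal{H}_{j_1\ldots j_m i_1\ldots i_m}}$. For $x=(x_1,\ldots,x_m)$, $x_i\in\mathbb{C}^{n_i}$, $\mathcal{H}(x,\overline{x}):=\langle\mathcal{H},x_1\otimes\cdots\otimes x_m\otimes\overline{x_1}\otimes\cdots\otimes\overline{x_m}\rangle$ with $\langle\mathcal{A},\mathcal{B}\rangle=\sum\mathcal{A}_{\cdot}\overline{\mathcal{B}_{\cdot}}$. $\mathcal{H}$ is HSOS (Hermitian sum of squares) if $\mathcal{H}(x,\overline{x})=|p_1(x)|^2+\cdots+|p_k(x)|^2$ for some complex polynomials $p_i$ in $x$ (not involving $\overline{x}$). The Hermitian flattening $\mathfrak{m}(\mathcal{H})$ is the $N\times N$ Hermitian matrix ($N=n_1\cdots n_m$) with $(\mathfrak{m}(\mathcal{H}))_{IJ}=\mathcal{H}_{i_1\ldots i_mj_1\ldots j_m}$ for $I=(i_1,\ldots,i_m)$, $J=(j_1,\ldots,j_m)$ in lexicographic order; equivalently $\mathfrak{m}$ is linear with $\mathfrak{m}(v_1\otimes\cdots\otimes v_m\otimes\overline{v_1}\otimes\cdots\otimes\overline{v_m})=(v_1v_1^*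 )\boxtimes\cdots\boxtimes(v_mv_m^* )$, $\boxtimes$ the Kronecker product. *)

theory Defs
  imports "HOL-Analysis.Analysis" "HOL-Library.Poly_Mapping"
begin

text \<open>Dimensions: a list n = [n_1,...,n_m]; m = length n.
  Index tuples I = (i_1,...,i_m) are lists of length m with I!k < n!k (0-based).\<close>

definition idx :: "nat list \<Rightarrow> nat list set" where
  "idx n = {I. length I = length n \<and> (\<forall>k<length n. I ! k < n ! k)}"

text \<open>Tensors of order 2m: functions of two index tuples (I,J);
  H I J = H_{i_1...i_m j_1...j_m}. Membership in C^[n_1,...,n_m] (Hermitian condition).\<close>

definition herm_tensor :: "nat list \<Rightarrow> (nat list \<Rightarrow> nat list \<Rightarrow> complex) \<Rightarrow> bool" where
  "herm_tensor n H \<longleftrightarrow> (\<forall>I\<in>idx n. \<forall>J\<in>idx n. H I J = cnj (H J I))"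

text \<open>A point x = (x_1,...,x_m), x_k \<in> C^{n_k}, is a function on variable pairs (k,j),
  x (k,j) = j-th coordinate of x_k.\<close>

text \<open>H(x, conj x) = < H, x_1 (x) ... (x) x_m (x) conj x_1 (x) ... (x) conj x_m >,
  with <A,B> = sum A * conj B.\<close>

definition Hform :: "nat list \<Rightarrow> (nat list \<Rightarrow> nat list \<Rightarrow> complex) \<Rightarrow> (nat \<times> nat \<Rightarrow> complex) \<Rightarrow> complex" where
  "Hform n H x = (\<Sum>I\<in>idx n. \<Sum>J\<in>idx n.
      H I J * cnj ((\<Prod>k<length n. x (k, I ! k)) * (\<Prod>k<length n. cnj (x (k, J ! k)))))"

type_synonym cpoly = "((nat \<times> nat) \<Rightarrow>\<^sub>0 nat) \<Rightarrow>\<^sub>0 complex"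

definition poly_eval :: "cpoly \<Rightarrow> (nat \<times> nat \<Rightarrow> complex) \<Rightarrow> complex" where
  "poly_eval p x = (\<Sum>\<alpha>\<in>Poly_Mapping.keys p. Poly_Mapping.lookup p \<alpha> * (\<Prod>v\<in>Poly_Mapping.keys \<alpha>. x v ^ Poly_Mapping.lookup \<alpha> v))"

definition poly_in_vars :: "nat list \<Rightarrow> cpoly \<Rightarrow> bool" where
  "poly_in_vars n p \<longleftrightarrow> (\<forall>\<alpha>\<in>Poly_Mapping.keys p. \<forall>v\<in>Poly_Mapping.keys \<alpha>. fst v < length n \<and> snd v < n ! fst v)"

definition HSOS :: "nat list \<Rightarrow> (nat list \<Rightarrow> nat list \<Rightarrow> complex) \<Rightarrow> bool" where
  "HSOS n H \<longleftrightarrow> (\<exists>ps :: cpoly list. (\<forall>p\<in>set ps. poly_in_vars n p) \<and>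
      (\<forall>x. Hform n H x = complex_of_real (\<Sum>p\<leftarrow>ps. (cmod (poly_eval p x))\<^sup>2)))"

text \<open>Lexicographic enumeration of index tuples: position a < n_1...n_m corresponds to
  the tuple unflat n a (first index most significant).\<close>

fun unflat :: "nat list \<Rightarrow> nat \<Rightarrow> nat list" where
  "unflat [] a = []"
| "unflat (k # ns) a = (a div prod_list ns) # unflat ns (a mod prod_list ns)"

text \<open>Hermitian flattening, an N x N matrix (N = n_1...n_m), given as entries on {0..<N}^2.\<close>

definition flattening :: "nat list \<Rightarrow> (nat list \<Rightarrow> nat list \<Rightarrow> complex) \<Rightarrow> nat \<Rightarrow> nat \<Rightarrow> complex" where
  "flattening n H a b = H (unflat n a) (unflat n b)"

definition psd :: "nat \<Rightarrow> (nat \<Rightarrow> nat \<Rightarrow> complex) \<Rightarrow> bool" where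
  "psd N M \<longleftrightarrow> (\<forall>a<N. \<forall>b<N. M a b = cnj (M b a)) \<and>
     (\<forall>v :: nat \<Rightarrow> complex. let q = (\<Sum>a<N. \<Sum>b<N. cnj (v a) * M a b * v b) in
        Im q = 0 \<and> Re q \<ge> 0)"

end

theory Submission
  imports Defs "HOL-Computational_Algebra.Polynomial" "HOL-Library.Nat_Bijection"
begin

text \<open>
  Read with the multilinear monomials x^I = x_{1,i_1} ... x_{m,i_m} as a vector, H(x, conj x) is the
  sesquilinear form of the flattening evaluated on that vector. A Gram decomposition
  M_{ab} = \<Sum>_u conj(u_a) u_b of the flattening therefore writes H(x, conj x) as the sum of the
  squared moduli of the polynomials \<Sum>_I u_I x^I, and every psd matrix has such a decomposition by
  symmetric elimination of one pivot at a time. Conversely, in an HSOS identity the coefficient of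
  x^J conj(x^I) gives H_{IJ} = \<Sum>_p conj(p_I) p_J, a Gram matrix. This comparison of coefficients of
  polynomials in x and conj x is reduced by Kronecker substitution x_v = w^(D^code(v)) to polynomials
  in a single w and conj w, whose coefficients vanish since they vanish on real rays and on the unit
  circle.
\<close>

section \<open>Polynomials in w and conj w\<close>

lemma infinite_unit_circle: "infinite (sphere (0::complex) 1)"
proof
  assume "finite (sphere (0::complex) 1)"
  moreover have "uncountable (sphere (0::complex) 1)"
    by (rule connected_uncountable[of _ 1 "-1"]) (auto intro: connected_sphere)
  ultimately show False
    using countable_finite by blast
qed

lemma conj_poly_homogeneous_part_eq_0:
  fixes c :: "nat \<Rightarrow> nat \<Rightarrow> complex"
  assumes vanish: "\<And>w. (\<Sum>a<K. \<Sum>b<K. c a b * w^a * cnj w^b) = 0"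
  shows "(\<Sum>a<K. \<Sum>b<K. if a + b = d then c a b * w^a * cnj w^b else 0) = 0"
proof -
  \<comment> \<open>For real t, the value at t w is a polynomial in t whose d-th coefficient is the degree-d part at w.\<close>
  define P where "P = (\<Sum>a<K. \<Sum>b<K. monom (c a b * w^a * cnj w^b) (a + b))"
  have "poly P (of_real t) = 0" for t
  proof -
    have "poly P (of_real t) = (\<Sum>a<K. \<Sum>b<K. c a b * (of_real t * w)^a * cnj (of_real t * w)^b)"
      unfolding P_def poly_sum poly_monom
      by (intro sum.cong refl) (simp add: power_mult_distrib power_add)
    also have "\<dots> = 0" by (rule vanish)
    finally show ?thesis .
  qed
  then have "range complex_of_real \<subseteq> {z. poly P z = 0}" by auto
  moreover have "infinite (range complex_of_real)"
    by (metis finite_imageD infinite_UNIV_char_0 inj_of_real)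
  ultimately have "P = 0" using poly_roots_finite finite_subset by blast
  then have "coeff P d = 0" by simp
  then show ?thesis unfolding P_def coeff_sum coeff_monom
    by (simp add: eq_commute[of d])
qed

lemma homogeneous_part_on_unit_circle:
  fixes c :: "nat \<Rightarrow> nat \<Rightarrow> complex"
  assumes unit: "w * cnj w = 1"
  shows "w^d * (\<Sum>a<K. \<Sum>b<K. if a + b = d then c a b * w^a * cnj w^b else 0)
    = poly (\<Sum>a<K. \<Sum>b<K. monom (if a + b = d then c a b else 0) (2 * a)) w"
  unfolding poly_sum poly_monom sum_distrib_left
proof (intro sum.cong refl)
  fix a b
  show "w^d * (if a + b = d then c a b * w^a * cnj w^b else 0) = (if a + b = d then c a b else 0) * w^(2 * a)"
  proof (cases "a + b = d")
    case True
    have square: "w^(2 * a) = w^a * w^a" by (simp add: mult_2 power_add)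
    have "w^d * (c a b * w^a * cnj w^b) = c a b * w^(2 * a) * (w * cnj w)^b"
      unfolding True[symmetric] square by (simp add: power_add power_mult_distrib algebra_simps)
    then show ?thesis using True unit by (metis mult_1_right power_one)
  qed simp
qed

lemma conj_poly_coeff_eq_0:
  fixes c :: "nat \<Rightarrow> nat \<Rightarrow> complex"
  assumes vanish: "\<And>w. (\<Sum>a<K. \<Sum>b<K. c a b * w^a * cnj w^b) = 0"
    and "a0 < K" "b0 < K"
  shows "c a0 b0 = 0"
proof -
  define d where "d = a0 + b0"
  define Q where "Q = (\<Sum>a<K. \<Sum>b<K. monom (if a + b = d then c a b else 0) (2 * a))"
  have "poly Q w = 0" if "w \<in> sphere 0 1" for w
  proof -
    have "w * cnj w = 1"
      using that by (simp flip: complex_norm_square)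
    then have "poly Q w = w^d * (\<Sum>a<K. \<Sum>b<K. if a + b = d then c a b * w^a * cnj w^b else 0)"
      unfolding Q_def by (rule homogeneous_part_on_unit_circle[symmetric])
    then show ?thesis
      using conj_poly_homogeneous_part_eq_0[OF vanish] by simp
  qed
  then have "Q = 0"
    using poly_roots_finite infinite_unit_circle finite_subset
    by (metis (mono_tags, lifting) mem_Collect_eq subsetI)
  then have "coeff Q (2 * a0) = 0" by simp
  moreover have "coeff Q (2 * a0) = (\<Sum>a<K. if a = a0 then \<Sum>b<K. if a + b = d then c a b else 0 else 0)"
    unfolding Q_def coeff_sum coeff_monom by (intro sum.cong refl) (auto simp: sum.neutral)
  moreover have "\<dots> = (\<Sum>b<K. if a0 + b = d then c a0 b else 0)"
    using \<open>a0 < K\<close> by (simp add: sum.delta)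
  moreover have "\<dots> = c a0 b0"
    using \<open>b0 < K\<close> by (simp add: d_def sum.delta)
  ultimately show ?thesis by simp
qed

lemma sum_conj_monomials_regroup:
  fixes f :: "'s \<Rightarrow> complex"
  assumes "finite S" and "\<And>s. s \<in> S \<Longrightarrow> A s < K" and "\<And>s. s \<in> S \<Longrightarrow> B s < K"
  shows "(\<Sum>s\<in>S. f s * w^(A s) * cnj w^(B s)) =
    (\<Sum>a<K. \<Sum>b<K. (\<Sum>s | s \<in> S \<and> A s = a \<and> B s = b. f s) * w^a * cnj w^b)"
proof -
  have "(\<Sum>a<K. \<Sum>b<K. (\<Sum>s | s \<in> S \<and> A s = a \<and> B s = b. f s) * w^a * cnj w^b)
     = (\<Sum>a<K. \<Sum>b<K. \<Sum>s\<in>S. if A s = a \<and> B s = b then f s * w^(A s) * cnj w^(B s) else 0)"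
    using \<open>finite S\<close> by (simp add: sum.inter_filter sum_distrib_right) (intro sum.cong refl, auto)
  also have "\<dots> = (\<Sum>s\<in>S. \<Sum>a<K. \<Sum>b<K. if A s = a \<and> B s = b then f s * w^(A s) * cnj w^(B s) else 0)"
    by (rule trans[OF sum.cong[OF refl sum.swap] sum.swap])
  also have "\<dots> = (\<Sum>s\<in>S. f s * w^(A s) * cnj w^(B s))"
  proof (rule sum.cong[OF refl])
    fix s assume "s \<in> S"
    have "(\<Sum>a<K. \<Sum>b<K. if A s = a \<and> B s = b then f s * w^(A s) * cnj w^(B s) else 0)
       = (\<Sum>a<K. if A s = a then \<Sum>b<K. if B s = b then f s * w^(A s) * cnj w^(B s) else 0 else 0)"
      by (intro sum.cong refl) auto
    also have "\<dots> = f s * w^(A s) * cnj w^(B s)"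
      using assms(2,3)[OF \<open>s \<in> S\<close>] by simp
    finally show "(\<Sum>a<K. \<Sum>b<K. if A s = a \<and> B s = b then f s * w^(A s) * cnj w^(B s) else 0)
      = f s * w^(A s) * cnj w^(B s)" .
  qed
  finally show ?thesis by simp
qed

lemma conj_monomial_coeffs_unique:
  fixes f :: "'s \<Rightarrow> complex" and g :: "'t \<Rightarrow> complex"
  assumes S: "finite S" and T: "finite T"
    and eq: "\<And>w. (\<Sum>s\<in>S. f s * w^(A s) * cnj w^(B s)) = (\<Sum>t\<in>T. g t * w^(A' t) * cnj w^(B' t))"
  shows "(\<Sum>s | s \<in> S \<and> A s = a \<and> B s = b. f s) = (\<Sum>t | t \<in> T \<and> A' t = a \<and> B' t = b. g t)"
proof -
  define K where "K = Suc (a + b + (\<Sum>s\<in>S. A s + B s) + (\<Sum>t\<in>T. A' t + B' t))"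
  have bound_S: "A s < K" "B s < K" if "s \<in> S" for s
    using member_le_sum[OF that, where f = "\<lambda>s. A s + B s"] S unfolding K_def by auto
  have bound_T: "A' t < K" "B' t < K" if "t \<in> T" for t
    using member_le_sum[OF that, where f = "\<lambda>t. A' t + B' t"] T unfolding K_def by auto
  define c where "c a b = (\<Sum>s | s \<in> S \<and> A s = a \<and> B s = b. f s)
    - (\<Sum>t | t \<in> T \<and> A' t = a \<and> B' t = b. g t)" for a b
  have "(\<Sum>a<K. \<Sum>b<K. c a b * w^a * cnj w^b) = 0" for w
    using eq[of w] sum_conj_monomials_regroup[OF S bound_S, where f = f and w = w]
      sum_conj_monomials_regroup[OF T bound_T, where f = g and w = w]
    unfolding c_def by (simp add: left_diff_distrib sum_subtractf)
  then have "c a b = 0"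
    by (rule conj_poly_coeff_eq_0) (auto simp: K_def)
  then show ?thesis unfolding c_def by simp
qed

section \<open>Kronecker substitution\<close>

lemma digit_sum_less:
  fixes e :: "nat \<Rightarrow> nat"
  assumes "\<And>u. u < E \<Longrightarrow> e u < D"
  shows "(\<Sum>u<E. e u * D^u) < D^E"
  using assms
proof (induction E)
  case (Suc E)
  have "(\<Sum>u<Suc E. e u * D^u) = (\<Sum>u<E. e u * D^u) + e E * D^E" by simp
  also have "\<dots> < D^E + e E * D^E" using Suc by simp
  also have "\<dots> = Suc (e E) * D^E" by simp
  also have "\<dots> \<le> D * D^E" using Suc.prems[of E] by (intro mult_right_mono) auto
  finally show ?case by simp
qed simp

lemma digit_sum_inj:
  fixes e e' :: "nat \<Rightarrow> nat"
  assumes "\<And>u. u < E \<Longrightarrow> e u < D" "\<And>u. u < E \<Longrightarrow> e' u < D"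
    and "(\<Sum>u<E. e u * D^u) = (\<Sum>u<E. e' u * D^u)"
  shows "\<forall>u<E. e u = e' u"
  using assms
proof (induction E)
  case (Suc E)
  let ?s = "\<Sum>u<E. e u * D^u" and ?s' = "\<Sum>u<E. e' u * D^u"
  have less: "?s < D^E" "?s' < D^E"
    using Suc.prems by (simp_all add: digit_sum_less)
  have eq: "?s + e E * D^E = ?s' + e' E * D^E"
    using Suc.prems(3) by simp
  have "D^E \<noteq> 0" using less by linarith
  then have "(?s + e E * D^E) div D^E = e E" "(?s' + e' E * D^E) div D^E = e' E"
    using less by (simp_all add: div_less)
  then have top: "e E = e' E" using eq by simp
  then have "?s = ?s'" using eq by simp
  moreover have "\<And>u. u < E \<Longrightarrow> e u < D" "\<And>u. u < E \<Longrightarrow> e' u < D"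
    using Suc.prems(1,2) by simp_all
  ultimately have "\<forall>u<E. e u = e' u"
    using Suc.IH by blast
  with top show ?case using less_Suc_eq by auto
qed simp

definition kronecker :: "nat \<Rightarrow> ((nat \<times> nat) \<Rightarrow>\<^sub>0 nat) \<Rightarrow> nat" where
  "kronecker D \<alpha> = (\<Sum>v\<in>Poly_Mapping.keys \<alpha>. Poly_Mapping.lookup \<alpha> v * D ^ prod_encode v)"

lemma kronecker_eq_digit_sum:
  assumes "\<And>v. v \<in> Poly_Mapping.keys \<alpha> \<Longrightarrow> prod_encode v < E"
  shows "kronecker D \<alpha> = (\<Sum>u<E. Poly_Mapping.lookup \<alpha> (prod_decode u) * D ^ u)"
proof -
  have "Poly_Mapping.keys \<alpha> \<subseteq> prod_decode ` {..<E}"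
    using assms by (metis image_eqI lessThan_iff prod_encode_inverse subsetI)
  then have "kronecker D \<alpha> =
      (\<Sum>v\<in>prod_decode ` {..<E}. Poly_Mapping.lookup \<alpha> v * D ^ prod_encode v)"
    unfolding kronecker_def by (intro sum.mono_neutral_left) (auto simp: in_keys_iff)
  also have "\<dots> = (\<Sum>u<E. Poly_Mapping.lookup \<alpha> (prod_decode u) * D ^ u)"
    by (subst sum.reindex) (auto intro: inj_onI simp: inj_prod_decode[THEN injD])
  finally show ?thesis .
qed

lemma kronecker_inj:
  assumes "\<And>v. Poly_Mapping.lookup \<alpha> v < D" and "\<And>v. Poly_Mapping.lookup \<beta> v < D"
    and "kronecker D \<alpha> = kronecker D \<beta>"
  shows "\<alpha> = \<beta>"
proof (rule poly_mapping_eqI)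
  fix v
  let ?V = "Poly_Mapping.keys \<alpha> \<union> Poly_Mapping.keys \<beta>"
  define E where "E = Suc (\<Sum>v\<in>?V. prod_encode v)"
  have bound: "prod_encode v < E" if "v \<in> ?V" for v
    using member_le_sum[OF that, where f = prod_encode] unfolding E_def by simp
  have digits: "\<forall>u<E. Poly_Mapping.lookup \<alpha> (prod_decode u) = Poly_Mapping.lookup \<beta> (prod_decode u)"
    using assms kronecker_eq_digit_sum[of \<alpha> E D] kronecker_eq_digit_sum[of \<beta> E D] bound
    by (intro digit_sum_inj[where D = D]) auto
  show "Poly_Mapping.lookup \<alpha> v = Poly_Mapping.lookup \<beta> v"
  proof (cases "v \<in> ?V")
    case True
    with digits bound show ?thesis by (metis prod_encode_inverse)
  qed (simp add: in_keys_iff)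
qed

lemma exponent_bound:
  fixes F :: "('a \<Rightarrow>\<^sub>0 nat) set"
  assumes "finite F"
  obtains D where "\<And>\<alpha> v. \<alpha> \<in> F \<Longrightarrow> Poly_Mapping.lookup \<alpha> v < D"
proof
  fix \<alpha> v assume "\<alpha> \<in> F"
  let ?deg = "\<lambda>\<alpha>. \<Sum>v\<in>Poly_Mapping.keys \<alpha>. Poly_Mapping.lookup \<alpha> v"
  have "Poly_Mapping.lookup \<alpha> v \<le> ?deg \<alpha>"
    by (cases "v \<in> Poly_Mapping.keys \<alpha>") (auto intro: member_le_sum simp: in_keys_iff)
  also have "\<dots> \<le> (\<Sum>\<alpha>\<in>F. ?deg \<alpha>)"
    using \<open>\<alpha> \<in> F\<close> assms by (intro member_le_sum) auto
  finally show "Poly_Mapping.lookup \<alpha> v < Suc (\<Sum>\<alpha>\<in>F. ?deg \<alpha>)" by simp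
qed

definition monom_eval :: "((nat \<times> nat) \<Rightarrow>\<^sub>0 nat) \<Rightarrow> (nat \<times> nat \<Rightarrow> complex) \<Rightarrow> complex" where
  "monom_eval \<alpha> x = (\<Prod>v\<in>Poly_Mapping.keys \<alpha>. x v ^ Poly_Mapping.lookup \<alpha> v)"

lemma monom_eval_kronecker: "monom_eval \<alpha> (\<lambda>v. w ^ (D ^ prod_encode v)) = w ^ kronecker D \<alpha>"
  unfolding monom_eval_def kronecker_def power_sum by (simp add: power_mult[symmetric] mult.commute)

lemma bimonomial_coeffs_unique:
  fixes f :: "'s \<Rightarrow> complex" and g :: "'t \<Rightarrow> complex"
  assumes S: "finite S" and T: "finite T"
    and eq: "\<And>x. (\<Sum>s\<in>S. f s * monom_eval (A s) x * cnj (monom_eval (B s) x))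
      = (\<Sum>t\<in>T. g t * monom_eval (A' t) x * cnj (monom_eval (B' t) x))"
  shows "(\<Sum>s | s \<in> S \<and> A s = \<alpha> \<and> B s = \<beta>. f s) = (\<Sum>t | t \<in> T \<and> A' t = \<alpha> \<and> B' t = \<beta>. g t)"
proof -
  define M where "M = {\<alpha>, \<beta>} \<union> A ` S \<union> B ` S \<union> A' ` T \<union> B' ` T"
  have "finite M" using S T by (simp add: M_def)
  then obtain D where D: "\<And>\<gamma> v. \<gamma> \<in> M \<Longrightarrow> Poly_Mapping.lookup \<gamma> v < D"
    using exponent_bound[OF \<open>finite M\<close>] by metis
  have kronecker_eq_iff: "kronecker D \<gamma> = kronecker D \<delta> \<longleftrightarrow> \<gamma> = \<delta>" if "\<gamma> \<in> M" "\<delta> \<in> M" for \<gamma> \<delta>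
    using kronecker_inj[OF D[OF that(1)] D[OF that(2)]] by blast
  \<comment> \<open>With all exponents below D, distinct monomials become distinct powers of w.\<close>
  have "(\<Sum>s\<in>S. f s * w^(kronecker D (A s)) * cnj w^(kronecker D (B s)))
      = (\<Sum>t\<in>T. g t * w^(kronecker D (A' t)) * cnj w^(kronecker D (B' t)))" for w
    using eq[of "\<lambda>v. w ^ (D ^ prod_encode v)"] by (simp add: monom_eval_kronecker)
  then have "(\<Sum>s | s \<in> S \<and> kronecker D (A s) = kronecker D \<alpha> \<and> kronecker D (B s) = kronecker D \<beta>. f s)
      = (\<Sum>t | t \<in> T \<and> kronecker D (A' t) = kronecker D \<alpha> \<and> kronecker D (B' t) = kronecker D \<beta>. g t)"
    by (rule conj_monomial_coeffs_unique[OF S T])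
  moreover have "{s \<in> S. kronecker D (A s) = kronecker D \<alpha> \<and> kronecker D (B s) = kronecker D \<beta>}
      = {s \<in> S. A s = \<alpha> \<and> B s = \<beta>}"
    using kronecker_eq_iff[of "A _" \<alpha>] kronecker_eq_iff[of "B _" \<beta>] by (auto simp: M_def)
  moreover have "{t \<in> T. kronecker D (A' t) = kronecker D \<alpha> \<and> kronecker D (B' t) = kronecker D \<beta>}
      = {t \<in> T. A' t = \<alpha> \<and> B' t = \<beta>}"
    using kronecker_eq_iff[of "A' _" \<alpha>] kronecker_eq_iff[of "B' _" \<beta>] by (auto simp: M_def)
  ultimately show ?thesis by simp
qed

section \<open>Multilinear monomials of index tuples\<close>

definition tensor_monom :: "nat list \<Rightarrow> (nat \<times> nat) \<Rightarrow>\<^sub>0 nat" where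
  "tensor_monom I = (\<Sum>k<length I. Poly_Mapping.single (k, I ! k) 1)"

lemma lookup_tensor_monom:
  "Poly_Mapping.lookup (tensor_monom I) (k, i) = (if k < length I \<and> i = I ! k then 1 else 0)"
proof -
  have "Poly_Mapping.lookup (tensor_monom I) (k, i) = (\<Sum>j<length I. if j = k then (if I ! k = i then 1 else 0) else 0)"
    unfolding tensor_monom_def lookup_sum lookup_single by (intro sum.cong refl) (auto simp: when_def)
  then show ?thesis by (auto simp: sum.delta')
qed

lemma keys_tensor_monom: "Poly_Mapping.keys (tensor_monom I) = (\<lambda>k. (k, I ! k)) ` {..<length I}"
  by (auto simp: in_keys_iff lookup_tensor_monom split: if_splits)

lemma tensor_monom_inj:
  assumes "length I = length J" and "tensor_monom I = tensor_monom J"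
  shows "I = J"
proof (rule nth_equalityI)
  fix k assume "k < length I"
  then have "Poly_Mapping.lookup (tensor_monom J) (k, I ! k) = 1"
    by (simp flip: assms(2) add: lookup_tensor_monom)
  then show "I ! k = J ! k" by (simp add: lookup_tensor_monom split: if_splits)
qed (use assms in simp)

lemma monom_eval_tensor_monom: "monom_eval (tensor_monom I) x = (\<Prod>k<length I. x (k, I ! k))"
  unfolding monom_eval_def keys_tensor_monom
  by (subst prod.reindex) (auto intro: inj_onI simp: lookup_tensor_monom)

lemma Hform_eq_bimonomial_sum:
  "Hform n H x = (\<Sum>I\<in>idx n. \<Sum>J\<in>idx n.
     H I J * cnj (monom_eval (tensor_monom I) x) * monom_eval (tensor_monom J) x)"
  unfolding Hform_def by (intro sum.cong refl) (simp add: monom_eval_tensor_monom idx_def)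

lemma finite_idx: "finite (idx n)"
proof (rule finite_subset)
  show "idx n \<subseteq> {I. set I \<subseteq> {..sum_list n} \<and> length I = length n}"
    unfolding idx_def by (force simp: in_set_conv_nth dest: elem_le_sum_list)
  show "finite {I. set I \<subseteq> {..sum_list n} \<and> length I = length n}"
    by (rule finite_lists_length_eq) simp
qed

lemma unflat_in_idx: "a < prod_list n \<Longrightarrow> unflat n a \<in> idx n"
proof (induction n arbitrary: a)
  case (Cons k ns)
  then have "prod_list ns > 0" by (cases "prod_list ns = 0") auto
  then have "a div prod_list ns < k" "unflat ns (a mod prod_list ns) \<in> idx ns"
    using Cons by (simp_all add: div_less_iff_less_mult mult.commute)
  then show ?case by (auto simp: idx_def nth_Cons split: nat.split)
qed (simp add: idx_def)

lemma inj_on_unflat: "inj_on (unflat n) {..<prod_list n}"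
proof (induction n)
  case (Cons k ns)
  show ?case
  proof (rule inj_onI)
    fix a b assume "a \<in> {..<prod_list (k # ns)}" "b \<in> {..<prod_list (k # ns)}"
      and eq: "unflat (k # ns) a = unflat (k # ns) b"
    then have "prod_list ns > 0" by (cases "prod_list ns = 0") auto
    then have "a mod prod_list ns = b mod prod_list ns"
      using eq Cons.IH by (auto dest: inj_onD)
    moreover have "a div prod_list ns = b div prod_list ns" using eq by simp
    ultimately show "a = b" by (metis div_mult_mod_eq)
  qed
qed (simp add: inj_on_def)

lemma unflat_surj: "I \<in> idx n \<Longrightarrow> \<exists>a<prod_list n. unflat n a = I"
proof (induction n arbitrary: I)
  case (Cons k ns)
  then obtain i I' where I: "I = i # I'" "i < k" "I' \<in> idx ns"
    by (cases I) (force simp: idx_def)+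
  obtain a' where a': "a' < prod_list ns" "unflat ns a' = I'"
    using Cons.IH[OF I(3)] by blast
  have "i * prod_list ns + a' < (i + 1) * prod_list ns" using a' by simp
  also have "\<dots> \<le> k * prod_list ns" using I by (intro mult_right_mono) auto
  finally have "i * prod_list ns + a' < prod_list (k # ns)" by simp
  moreover have "unflat (k # ns) (i * prod_list ns + a') = I" using a' I by simp
  ultimately show ?case by blast
qed (simp add: idx_def)

lemma bij_betw_unflat: "bij_betw (unflat n) {..<prod_list n} (idx n)"
  unfolding bij_betw_def using inj_on_unflat unflat_in_idx unflat_surj by fastforce

lemma poly_eval_eq_sum_superset:
  assumes "finite A" and "Poly_Mapping.keys p \<subseteq> A"
  shows "poly_eval p x = (\<Sum>\<alpha>\<in>A. Poly_Mapping.lookup p \<alpha> * monom_eval \<alpha> x)"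
  unfolding poly_eval_def monom_eval_def using assms
  by (intro sum.mono_neutral_left) (auto simp: in_keys_iff)

lemma keys_sum_single: "Poly_Mapping.keys (\<Sum>b\<in>B. Poly_Mapping.single (m b) (c b)) \<subseteq> m ` B"
  using keys_sum[of "\<lambda>b. Poly_Mapping.single (m b) (c b)" B] by (auto split: if_splits)

lemma poly_eval_sum_single:
  fixes c :: "'b \<Rightarrow> complex"
  assumes "finite B"
  shows "poly_eval (\<Sum>b\<in>B. Poly_Mapping.single (m b) (c b)) x = (\<Sum>b\<in>B. c b * monom_eval (m b) x)"
proof -
  let ?p = "\<Sum>b\<in>B. Poly_Mapping.single (m b) (c b)"
  have "poly_eval ?p x = (\<Sum>\<alpha>\<in>m ` B. Poly_Mapping.lookup ?p \<alpha> * monom_eval \<alpha> x)"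
    using assms keys_sum_single by (rule poly_eval_eq_sum_superset[OF finite_imageI])
  also have "\<dots> = (\<Sum>\<alpha>\<in>m ` B. \<Sum>b\<in>B. if m b = \<alpha> then c b * monom_eval \<alpha> x else 0)"
    unfolding lookup_sum lookup_single sum_distrib_right
    by (intro sum.cong refl) (auto simp: when_def)
  also have "\<dots> = (\<Sum>b\<in>B. c b * monom_eval (m b) x)"
    using assms by (subst sum.swap) (simp add: sum.delta)
  finally show ?thesis .
qed

lemma norm_square_poly_eval:
  assumes "finite A" and "Poly_Mapping.keys p \<subseteq> A"
  shows "complex_of_real ((cmod (poly_eval p x))\<^sup>2) = (\<Sum>\<alpha>\<in>A. \<Sum>\<beta>\<in>A.
     Poly_Mapping.lookup p \<alpha> * cnj (Poly_Mapping.lookup p \<beta>) * monom_eval \<alpha> x * cnj (monom_eval \<beta> x))"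
  unfolding complex_norm_square poly_eval_eq_sum_superset[OF assms] cnj_sum sum_product
  by (simp add: mult_ac)

section \<open>Positive semidefinite and Gram matrices\<close>

definition sesq_form :: "nat \<Rightarrow> (nat \<Rightarrow> nat \<Rightarrow> complex) \<Rightarrow> (nat \<Rightarrow> complex) \<Rightarrow> (nat \<Rightarrow> complex) \<Rightarrow> complex" where
  "sesq_form N M v w = (\<Sum>a<N. \<Sum>b<N. cnj (v a) * M a b * w b)"

definition gram :: "(nat \<Rightarrow> complex) list \<Rightarrow> nat \<Rightarrow> nat \<Rightarrow> complex" where
  "gram us a b = (\<Sum>u\<leftarrow>us. cnj (u a) * u b)"

lemma psd_iff_sesq_form:
  "psd N M \<longleftrightarrow> (\<forall>a<N. \<forall>b<N. M a b = cnj (M b a)) \<and>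
     (\<forall>v. Im (sesq_form N M v v) = 0 \<and> 0 \<le> Re (sesq_form N M v v))"
  unfolding psd_def sesq_form_def Let_def ..

lemma sesq_form_cong:
  "(\<And>a b. a < N \<Longrightarrow> b < N \<Longrightarrow> M a b = M' a b) \<Longrightarrow> sesq_form N M v w = sesq_form N M' v w"
  unfolding sesq_form_def by simp

lemma psd_cong:
  "(\<And>a b. a < N \<Longrightarrow> b < N \<Longrightarrow> M a b = M' a b) \<Longrightarrow> psd N M \<longleftrightarrow> psd N M'"
  unfolding psd_iff_sesq_form using sesq_form_cong[of N M M'] by auto

lemma sesq_form_add_left: "sesq_form N M (\<lambda>a. v a + v' a) w = sesq_form N M v w + sesq_form N M v' w"
  unfolding sesq_form_def by (simp add: algebra_simps sum.distrib)

lemma sesq_form_add_right: "sesq_form N M v (\<lambda>b. w b + w' b) = sesq_form N M v w + sesq_form N M v w'"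
  unfolding sesq_form_def by (simp add: algebra_simps sum.distrib)

lemma sesq_form_delta_left:
  assumes "p < N"
  shows "sesq_form N M (\<lambda>a. if a = p then t else 0) w = cnj t * (\<Sum>b<N. M p b * w b)"
proof -
  have "sesq_form N M (\<lambda>a. if a = p then t else 0) w
      = (\<Sum>a<N. if a = p then \<Sum>b<N. cnj t * M p b * w b else 0)"
    unfolding sesq_form_def by (intro sum.cong refl) auto
  also have "\<dots> = (\<Sum>b<N. cnj t * M p b * w b)" using assms by (simp add: sum.delta)
  finally show ?thesis by (simp add: sum_distrib_left mult.assoc)
qed

lemma sesq_form_delta_right:
  assumes "p < N"
  shows "sesq_form N M v (\<lambda>b. if b = p then t else 0) = (\<Sum>a<N. cnj (v a) * M a p) * t"
proof -
  have "sesq_form N M v (\<lambda>b. if b = p then t else 0)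
      = (\<Sum>a<N. \<Sum>b<N. if b = p then cnj (v a) * M a p * t else 0)"
    unfolding sesq_form_def by (intro sum.cong refl) auto
  also have "\<dots> = (\<Sum>a<N. cnj (v a) * M a p * t)" using assms by (simp add: sum.delta)
  finally show ?thesis by (simp add: sum_distrib_right)
qed

lemma sesq_form_delta_both:
  assumes "p < N" and "q < N"
  shows "sesq_form N M (\<lambda>a. if a = p then t else 0) (\<lambda>b. if b = q then s else 0) = cnj t * M p q * s"
proof -
  have "(\<Sum>b<N. M p b * (if b = q then s else 0)) = (\<Sum>b<N. if b = q then M p q * s else 0)"
    by (intro sum.cong refl) auto
  also have "\<dots> = M p q * s" using assms(2) by (simp add: sum.delta)
  finally show ?thesis using sesq_form_delta_left[OF assms(1), of M t] by (simp add: mult.assoc)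
qed

lemma sesq_form_gram: "sesq_form N (gram us) v v = complex_of_real (\<Sum>u\<leftarrow>us. (cmod (\<Sum>a<N. u a * v a))\<^sup>2)"
proof (induction us)
  case (Cons u us)
  have "sesq_form N (gram (u # us)) v v
      = (\<Sum>a<N. \<Sum>b<N. cnj (u a * v a) * (u b * v b)) + sesq_form N (gram us) v v"
    unfolding sesq_form_def gram_def by (simp add: sum.distrib[symmetric] algebra_simps)
  also have "(\<Sum>a<N. \<Sum>b<N. cnj (u a * v a) * (u b * v b)) = complex_of_real ((cmod (\<Sum>a<N. u a * v a))\<^sup>2)"
    unfolding complex_norm_square cnj_sum sum_product by (subst sum.swap) (simp add: mult_ac)
  finally show ?case using Cons.IH by simp
qed (simp add: sesq_form_def gram_def)

lemma cnj_gram: "cnj (gram us a b) = gram us b a"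
  by (induction us) (simp_all add: gram_def mult.commute)

lemma psd_gram: "psd N (gram us)"
  unfolding psd_iff_sesq_form sesq_form_gram
  by (auto simp: cnj_gram intro!: sum_list_nonneg)

lemma psd_hermitian: "psd N M \<Longrightarrow> a < N \<Longrightarrow> b < N \<Longrightarrow> M a b = cnj (M b a)"
  unfolding psd_iff_sesq_form by blast

lemma psd_sesq_form: "psd N M \<Longrightarrow> Im (sesq_form N M v v) = 0 \<and> 0 \<le> Re (sesq_form N M v v)"
  unfolding psd_iff_sesq_form by blast

lemma psd_diag:
  assumes "psd N M" and "p < N"
  shows "Im (M p p) = 0" and "0 \<le> Re (M p p)"
proof -
  let ?e = "\<lambda>a. if a = p then 1 else 0"
  have "sesq_form N M ?e ?e = M p p"
    using sesq_form_delta_both[OF assms(2) assms(2)] by simp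
  moreover have "Im (sesq_form N M ?e ?e) = 0 \<and> 0 \<le> Re (sesq_form N M ?e ?e)"
    by (rule psd_sesq_form[OF assms(1)])
  ultimately show "Im (M p p) = 0" "0 \<le> Re (M p p)" by simp_all
qed

lemma psd_zero_diag_imp_zero_row:
  assumes psd: "psd N M" and "p < N" "b < N" and "M p p = 0"
  shows "M p b = 0"
proof (rule ccontr)
  define z where "z = M p b"
  assume "M p b \<noteq> 0"
  then have "z \<noteq> 0" by (simp add: z_def)
  define s :: real where "s = (\<bar>Re (M b b)\<bar> + 1) / (2 * (cmod z)\<^sup>2)"
  define t where "t = - of_real s * z"
  define v where "v a = (if a = b then 1 else 0) + (if a = p then t else 0)" for a
  have "M b p = cnj z"
    using psd_hermitian[OF psd \<open>b < N\<close> \<open>p < N\<close>] by (simp add: z_def)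
  \<comment> \<open>As M p p = 0, the form is affine along the p-th axis, so it becomes negative.\<close>
  then have "sesq_form N M v v = M b b + cnj z * t + cnj t * z"
    unfolding v_def sesq_form_add_left sesq_form_add_right
    using \<open>p < N\<close> \<open>b < N\<close> \<open>M p p = 0\<close> by (simp add: sesq_form_delta_both z_def)
  also have "\<dots> = M b b - of_real (2 * s * (cmod z)\<^sup>2)"
    unfolding t_def by (simp add: complex_norm_square[symmetric] algebra_simps)
  also have "2 * s * (cmod z)\<^sup>2 = \<bar>Re (M b b)\<bar> + 1"
    using \<open>z \<noteq> 0\<close> unfolding s_def by (simp add: field_simps)
  finally have "Re (sesq_form N M v v) < 0" by simp
  then show False using psd_sesq_form[OF psd, of v] by linarith
qed

lemma sesq_form_schur_complement:
  fixes v :: "nat \<Rightarrow> complex"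
  assumes herm: "\<And>a b. a < N \<Longrightarrow> b < N \<Longrightarrow> M a b = cnj (M b a)"
    and "p < N" and Mpp: "M p p = complex_of_real r" and "r > 0"
  defines "u \<equiv> \<lambda>a. M p a / complex_of_real (sqrt r)"
    and "s \<equiv> (\<Sum>b<N. M p b * v b)"
  shows "sesq_form N (\<lambda>a b. M a b - cnj (u a) * u b) v v
    = sesq_form N M (\<lambda>a. v a + (if a = p then - s / r else 0)) (\<lambda>a. v a + (if a = p then - s / r else 0))"
proof -
  define t where "t = - s / r"
  define e where "e a = (if a = p then t else 0)" for a
  have sqrt_square: "complex_of_real (sqrt r) * complex_of_real (sqrt r) = complex_of_real r"
    using \<open>r > 0\<close> by (simp flip: of_real_mult)
  have u_sum: "(\<Sum>b<N. u b * v b) = s / complex_of_real (sqrt r)"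
    unfolding u_def s_def by (simp add: sum_divide_distrib)
  have "sesq_form N (\<lambda>a b. M a b - cnj (u a) * u b) v v
      = sesq_form N M v v - (\<Sum>a<N. \<Sum>b<N. cnj (u a * v a) * (u b * v b))"
    unfolding sesq_form_def by (simp add: algebra_simps sum_subtractf)
  also have "(\<Sum>a<N. \<Sum>b<N. cnj (u a * v a) * (u b * v b)) = cnj (\<Sum>a<N. u a * v a) * (\<Sum>b<N. u b * v b)"
    unfolding cnj_sum sum_product by simp
  also have "\<dots> = cnj s * s / r"
    unfolding u_sum using sqrt_square \<open>r > 0\<close> by (simp add: field_simps)
  finally have complement: "sesq_form N (\<lambda>a b. M a b - cnj (u a) * u b) v v = sesq_form N M v v - cnj s * s / r" .
  have "(\<Sum>a<N. cnj (v a) * M a p) = cnj s"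
    unfolding s_def cnj_sum
  proof (intro sum.cong refl)
    fix a assume "a \<in> {..<N}"
    then have "M a p = cnj (M p a)" using herm \<open>p < N\<close> by blast
    then show "cnj (v a) * M a p = cnj (M p a * v a)" by (simp add: mult.commute)
  qed
  then have "sesq_form N M (\<lambda>a. v a + e a) (\<lambda>a. v a + e a)
      = sesq_form N M v v + cnj s * t + cnj t * s + cnj t * r * t"
    unfolding sesq_form_add_left sesq_form_add_right e_def
      sesq_form_delta_both[OF \<open>p < N\<close> \<open>p < N\<close>] sesq_form_delta_right[OF \<open>p < N\<close>]
      sesq_form_delta_left[OF \<open>p < N\<close>] s_def[symmetric] Mpp
    by simp
  also have "\<dots> = sesq_form N M v v - cnj s * s / r"
    unfolding t_def using \<open>r > 0\<close> by (simp add: field_simps)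
  finally show ?thesis
    unfolding complement e_def t_def by (rule sym)
qed

lemma psd_schur_complement:
  assumes psd: "psd N M" and "p < N" and "Re (M p p) > 0"
  defines "u \<equiv> \<lambda>a. M p a / complex_of_real (sqrt (Re (M p p)))"
  shows "psd N (\<lambda>a b. M a b - cnj (u a) * u b)"
  unfolding psd_iff_sesq_form
proof (intro conjI allI impI)
  fix a b assume "a < N" "b < N"
  then have "M a b = cnj (M b a)" by (rule psd_hermitian[OF psd])
  then show "M a b - cnj (u a) * u b = cnj (M b a - cnj (u b) * u a)" by simp
next
  fix v
  have Mpp: "M p p = complex_of_real (Re (M p p))"
    using psd_diag(1)[OF psd \<open>p < N\<close>] by (simp add: complex_eq_iff)
  have "sesq_form N (\<lambda>a b. M a b - cnj (u a) * u b) v v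
      = sesq_form N M (\<lambda>a. v a + (if a = p then - (\<Sum>b<N. M p b * v b) / Re (M p p) else 0))
          (\<lambda>a. v a + (if a = p then - (\<Sum>b<N. M p b * v b) / Re (M p p) else 0))"
    unfolding u_def
    by (rule sesq_form_schur_complement[where M = M, OF psd_hermitian[OF psd] \<open>p < N\<close> Mpp \<open>Re (M p p) > 0\<close>])
  then show "Im (sesq_form N (\<lambda>a b. M a b - cnj (u a) * u b) v v) = 0"
    "0 \<le> Re (sesq_form N (\<lambda>a b. M a b - cnj (u a) * u b) v v)"
    using psd_sesq_form[OF psd] by simp_all
qed

lemma psd_pivot:
  assumes psd: "psd N M" and "p < N"
  defines "u \<equiv> \<lambda>a. M p a / complex_of_real (sqrt (Re (M p p)))"
  shows "psd N (\<lambda>a b. M a b - cnj (u a) * u b)" and "\<And>b. b < N \<Longrightarrow> M p b = cnj (u p) * u b"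
proof -
  \<comment> \<open>If M p p = 0 then row p vanishes and u = 0 (division by 0 yields 0), so one u serves both cases.\<close>
  have Mpp: "M p p = complex_of_real (Re (M p p))"
    using psd_diag(1)[OF psd \<open>p < N\<close>] by (simp add: complex_eq_iff)
  consider "Re (M p p) = 0" | "Re (M p p) > 0"
    using psd_diag(2)[OF psd \<open>p < N\<close>] by linarith
  then have "psd N (\<lambda>a b. M a b - cnj (u a) * u b) \<and> (\<forall>b<N. M p b = cnj (u p) * u b)"
  proof cases
    case 1
    then have "M p b = 0" if "b < N" for b
      using Mpp psd_zero_diag_imp_zero_row[OF psd \<open>p < N\<close> that] by simp
    with psd show ?thesis by (simp add: u_def 1)
  next
    case 2
    have "u p = complex_of_real (sqrt (Re (M p p)))"
      unfolding u_def using 2 by (subst Mpp) (simp add: real_div_sqrt flip: of_real_divide)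
    then have "cnj (u p) * u b = M p b" for b
      unfolding u_def using 2 by simp
    with psd_schur_complement[OF psd \<open>p < N\<close> 2] show ?thesis by (simp add: u_def)
  qed
  then show "psd N (\<lambda>a b. M a b - cnj (u a) * u b)" and "\<And>b. b < N \<Longrightarrow> M p b = cnj (u p) * u b"
    by simp_all
qed

lemma psd_supported_imp_gram:
  assumes "psd N M" and "\<And>a b. a < N \<Longrightarrow> b < N \<Longrightarrow> k \<le> a \<or> k \<le> b \<Longrightarrow> M a b = 0"
  shows "\<exists>us. \<forall>a<N. \<forall>b<N. M a b = gram us a b"
  using assms
proof (induction k arbitrary: M)
  case 0
  then show ?case by (intro exI[of _ "[]"]) (simp add: gram_def)
next
  case (Suc k)
  show ?case
  proof (cases "k < N")
    case False
    then show ?thesis using Suc by auto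
  next
    case True
    define u where "u a = M k a / complex_of_real (sqrt (Re (M k k)))" for a
    define M' where "M' a b = M a b - cnj (u a) * u b" for a b
    have row: "\<And>b. b < N \<Longrightarrow> M k b = cnj (u k) * u b"
      using psd_pivot(2)[OF Suc.prems(1) True] unfolding u_def .
    have "psd N M'"
      using psd_pivot(1)[OF Suc.prems(1) True] unfolding M'_def u_def .
    moreover have "M' a b = 0" if ab: "a < N" "b < N" and "k \<le> a \<or> k \<le> b" for a b
    proof -
      consider "a = k" | "b = k" | "Suc k \<le> a" "b \<noteq> k" | "Suc k \<le> b" "a \<noteq> k"
        using \<open>k \<le> a \<or> k \<le> b\<close> by linarith
      then show ?thesis
      proof cases
        case 2
        have "M a k = cnj (M k a)" using psd_hermitian[OF Suc.prems(1) ab(1) True] .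
        then show ?thesis using row[OF ab(1)] by (simp add: M'_def 2)
      qed (use row Suc.prems(2) ab True in \<open>auto simp: M'_def u_def\<close>)
    qed
    ultimately obtain us where "\<forall>a<N. \<forall>b<N. M' a b = gram us a b"
      using Suc.IH by blast
    then have "\<forall>a<N. \<forall>b<N. M a b = gram (u # us) a b"
      by (simp add: M'_def gram_def algebra_simps)
    then show ?thesis by blast
  qed
qed

lemma psd_iff_gram: "psd N M \<longleftrightarrow> (\<exists>us. \<forall>a<N. \<forall>b<N. M a b = gram us a b)"
proof
  assume "psd N M"
  then show "\<exists>us. \<forall>a<N. \<forall>b<N. M a b = gram us a b"
    by (rule psd_supported_imp_gram[where k = N]) auto
next
  assume "\<exists>us. \<forall>a<N. \<forall>b<N. M a b = gram us a b"
  then show "psd N M" using psd_cong psd_gram by metis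
qed

section \<open>Hermitian sums of squares\<close>

lemma Hform_eq_sesq_form:
  "Hform n H x = sesq_form (prod_list n) (flattening n H)
     (\<lambda>a. monom_eval (tensor_monom (unflat n a)) x) (\<lambda>a. monom_eval (tensor_monom (unflat n a)) x)"
  unfolding Hform_eq_bimonomial_sum sesq_form_def flattening_def
    sum.reindex_bij_betw[OF bij_betw_unflat, symmetric]
  by (simp add: mult_ac)

definition tensor_poly :: "nat list \<Rightarrow> (nat \<Rightarrow> complex) \<Rightarrow> cpoly" where
  "tensor_poly n u = (\<Sum>b<prod_list n. Poly_Mapping.single (tensor_monom (unflat n b)) (u b))"

lemma poly_eval_tensor_poly:
  "poly_eval (tensor_poly n u) x = (\<Sum>b<prod_list n. u b * monom_eval (tensor_monom (unflat n b)) x)"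
  unfolding tensor_poly_def by (simp add: poly_eval_sum_single)

lemma poly_in_vars_tensor_poly: "poly_in_vars n (tensor_poly n u)"
  unfolding poly_in_vars_def
proof (intro ballI)
  fix \<alpha> v assume "\<alpha> \<in> Poly_Mapping.keys (tensor_poly n u)" and v: "v \<in> Poly_Mapping.keys \<alpha>"
  then obtain b where "b < prod_list n" and \<alpha>: "\<alpha> = tensor_monom (unflat n b)"
    using keys_sum_single[of "\<lambda>b. tensor_monom (unflat n b)" u "{..<prod_list n}"]
    unfolding tensor_poly_def by auto
  from \<open>b < prod_list n\<close> have "unflat n b \<in> idx n" by (rule unflat_in_idx)
  with v show "fst v < length n \<and> snd v < n ! fst v"
    unfolding \<alpha> keys_tensor_monom by (auto simp: idx_def)
qed

lemma sum_list_norm_square_poly_eval: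
  assumes "finite A" and "\<And>p. p \<in> set ps \<Longrightarrow> Poly_Mapping.keys p \<subseteq> A"
  shows "complex_of_real (\<Sum>p\<leftarrow>ps. (cmod (poly_eval p x))\<^sup>2)
    = (\<Sum>t\<in>{..<length ps} \<times> A \<times> A. Poly_Mapping.lookup (ps ! fst t) (fst (snd t))
        * cnj (Poly_Mapping.lookup (ps ! fst t) (snd (snd t))) * monom_eval (fst (snd t)) x * cnj (monom_eval (snd (snd t)) x))"
proof -
  have "complex_of_real (\<Sum>p\<leftarrow>ps. (cmod (poly_eval p x))\<^sup>2)
      = (\<Sum>i<length ps. complex_of_real ((cmod (poly_eval (ps ! i) x))\<^sup>2))"
    unfolding sum_list_sum_nth by (simp add: atLeast0LessThan)
  also have "\<dots> = (\<Sum>i<length ps. \<Sum>\<alpha>\<in>A. \<Sum>\<beta>\<in>A. Poly_Mapping.lookup (ps ! i) \<alpha>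
      * cnj (Poly_Mapping.lookup (ps ! i) \<beta>) * monom_eval \<alpha> x * cnj (monom_eval \<beta> x))"
    using assms by (intro sum.cong refl norm_square_poly_eval) auto
  finally show ?thesis
    by (simp add: sum.cartesian_product split_def)
qed

lemma HSOS_entry_eq_sum_coeffs:
  assumes sos: "\<And>x. Hform n H x = complex_of_real (\<Sum>p\<leftarrow>ps. (cmod (poly_eval p x))\<^sup>2)"
    and "I \<in> idx n" and "J \<in> idx n"
  shows "H I J = (\<Sum>p\<leftarrow>ps. cnj (Poly_Mapping.lookup p (tensor_monom I)) * Poly_Mapping.lookup p (tensor_monom J))"
proof -
  define A where "A = {tensor_monom I, tensor_monom J} \<union> (\<Union>p\<in>set ps. Poly_Mapping.keys p)"
  have A: "finite A" "\<And>p. p \<in> set ps \<Longrightarrow> Poly_Mapping.keys p \<subseteq> A"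
    unfolding A_def by auto
  let ?S = "idx n \<times> idx n" and ?T = "{..<length ps} \<times> A \<times> A"
  let ?c = "\<lambda>t. Poly_Mapping.lookup (ps ! fst t)"
  have "(\<Sum>s\<in>?S. H (fst s) (snd s) * monom_eval (tensor_monom (snd s)) x * cnj (monom_eval (tensor_monom (fst s)) x))
      = (\<Sum>t\<in>?T. ?c t (fst (snd t)) * cnj (?c t (snd (snd t)))
          * monom_eval (fst (snd t)) x * cnj (monom_eval (snd (snd t)) x))" for x
  proof -
    have "(\<Sum>s\<in>?S. H (fst s) (snd s) * monom_eval (tensor_monom (snd s)) x * cnj (monom_eval (tensor_monom (fst s)) x))
        = Hform n H x"
      unfolding Hform_eq_bimonomial_sum sum.cartesian_product by (simp add: split_def mult_ac)
    also have "\<dots> = complex_of_real (\<Sum>p\<leftarrow>ps. (cmod (poly_eval p x))\<^sup>2)"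
      by (rule sos)
    also have "\<dots> = (\<Sum>t\<in>?T. ?c t (fst (snd t)) * cnj (?c t (snd (snd t)))
          * monom_eval (fst (snd t)) x * cnj (monom_eval (snd (snd t)) x))"
      by (rule sum_list_norm_square_poly_eval[OF A])
    finally show ?thesis .
  qed
  then have "(\<Sum>s | s \<in> ?S \<and> tensor_monom (snd s) = tensor_monom J \<and> tensor_monom (fst s) = tensor_monom I. H (fst s) (snd s))
      = (\<Sum>t | t \<in> ?T \<and> fst (snd t) = tensor_monom J \<and> snd (snd t) = tensor_monom I.
          ?c t (fst (snd t)) * cnj (?c t (snd (snd t))))"
    by (rule bimonomial_coeffs_unique[rotated 2]) (simp_all add: finite_idx A)
  moreover have "{s. s \<in> ?S \<and> tensor_monom (snd s) = tensor_monom J \<and> tensor_monom (fst s) = tensor_monom I} = {(I, J)}"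
    using \<open>I \<in> idx n\<close> \<open>J \<in> idx n\<close> by (auto simp: idx_def) (metis tensor_monom_inj)+
  moreover have "{t. t \<in> ?T \<and> fst (snd t) = tensor_monom J \<and> snd (snd t) = tensor_monom I}
      = (\<lambda>i. (i, tensor_monom J, tensor_monom I)) ` {..<length ps}"
    by (auto simp: A_def)
  ultimately show ?thesis
    by (simp add: sum.reindex inj_on_def sum_list_sum_nth atLeast0LessThan mult.commute)
qed

lemma HSOS_iff_flattening_gram:
  "HSOS n H \<longleftrightarrow> (\<exists>us. \<forall>a<prod_list n. \<forall>b<prod_list n. flattening n H a b = gram us a b)"
proof
  assume "HSOS n H"
  then obtain ps where sos: "\<And>x. Hform n H x = complex_of_real (\<Sum>p\<leftarrow>ps. (cmod (poly_eval p x))\<^sup>2)"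
    unfolding HSOS_def by blast
  have "flattening n H a b
      = gram (map (\<lambda>p b. Poly_Mapping.lookup p (tensor_monom (unflat n b))) ps) a b"
    if "a < prod_list n" "b < prod_list n" for a b
    using HSOS_entry_eq_sum_coeffs[OF sos unflat_in_idx unflat_in_idx, OF that]
    by (simp add: flattening_def gram_def o_def)
  then show "\<exists>us. \<forall>a<prod_list n. \<forall>b<prod_list n. flattening n H a b = gram us a b" by blast
next
  assume "\<exists>us. \<forall>a<prod_list n. \<forall>b<prod_list n. flattening n H a b = gram us a b"
  then obtain us where gram: "\<And>a b. a < prod_list n \<Longrightarrow> b < prod_list n \<Longrightarrow> flattening n H a b = gram us a b"
    by blast
  have "Hform n H x = complex_of_real (\<Sum>p\<leftarrow>map (tensor_poly n) us. (cmod (poly_eval p x))\<^sup>2)" for x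
  proof -
    let ?E = "\<lambda>a. monom_eval (tensor_monom (unflat n a)) x"
    have "Hform n H x = sesq_form (prod_list n) (flattening n H) ?E ?E"
      by (rule Hform_eq_sesq_form)
    also have "\<dots> = sesq_form (prod_list n) (gram us) ?E ?E"
      using gram by (rule sesq_form_cong)
    finally show ?thesis
      by (simp add: sesq_form_gram poly_eval_tensor_poly o_def)
  qed
  then show "HSOS n H"
    unfolding HSOS_def using poly_in_vars_tensor_poly by (intro exI[of _ "map (tensor_poly n) us"]) auto
qed

theorem proposition5p7:
  fixes n :: "nat list" and H :: "nat list \<Rightarrow> nat list \<Rightarrow> complex"
  assumes "herm_tensor n H"
  shows "HSOS n H \<longleftrightarrow> psd (prod_list n) (flattening n H)"
  using HSOS_iff_flattening_gram psd_iff_gram by blast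

end
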